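(* Let $\rho$ be a bipartite state and let $\Lambda=\{\Pi_1,\dots\}$ and $\Lambda'=\{\Pi'_1,\dots\}$ be projective measurements on the first and second registers respectively, such that $\mathrm{Tr}[(\Pi_1\otimes\Pi'_1)\rho]\ge1-\varepsilon$. Let $M=\{M_i\}_{i\in\mathcal{I}}$ be a general measurement on the first register, fix $i\in\mathcal{I}$, let $p_i=\mathrm{Tr}[(M_i^\dagger M_i\otimes I)\rho]$ be the probability of outcome $i$, and let $\tau$ be the post-measurement state of the second register after applying $M$ to the first register of $\rho$ and obtaining outcome $i$. Then $\mathrm{Tr}[\Pi'_1\tau]\ge1-\frac{\sqrt{\varepsilon}}{p_i}$. *)

theory Defs
  imports "HOL-Analysis.Analysis"
begin

text \<open>Finite-dimensional quantum systems: operators on a system with basis indexed by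
  a finite type 'n are complex matrices of type complex^'n^'n.\<close>

type_synonym 'n cmat = "complex ^'n ^'n"

definition adj :: "('n::finite) cmat \<Rightarrow> 'n cmat" where
  "adj A = (\<chi> i j. cnj (A $ j $ i))"

definition mtrace :: "('n::finite) cmat \<Rightarrow> complex" where
  "mtrace A = (\<Sum>i\<in>UNIV. A $ i $ i)"

definition kron :: "('a::finite) cmat \<Rightarrow> ('b::finite) cmat \<Rightarrow> ('a \<times> 'b) cmat" where
  "kron A B = (\<chi> p q. A $ fst p $ fst q * B $ snd p $ snd q)"

definition ptrace1 :: "(('a::finite) \<times> ('b::finite)) cmat \<Rightarrow> 'b cmat" where
  "ptrace1 R = (\<chi> j l. \<Sum>i\<in>UNIV. R $ (i, j) $ (i, l))"

definition psd :: "('n::finite) cmat \<Rightarrow> bool" where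
  "psd A \<longleftrightarrow> (\<forall>v :: complex ^'n.
      let z = (\<Sum>i\<in>UNIV. cnj (v $ i) * (A *v v) $ i) in Im z = 0 \<and> Re z \<ge> 0)"

definition density :: "('n::finite) cmat \<Rightarrow> bool" where
  "density \<rho> \<longleftrightarrow> adj \<rho> = \<rho> \<and> psd \<rho> \<and> mtrace \<rho> = 1"

definition projective_measurement :: "(nat \<Rightarrow> ('n::finite) cmat) \<Rightarrow> nat \<Rightarrow> bool" where
  "projective_measurement P m \<longleftrightarrow> m \<ge> 1 \<and>
     (\<forall>k\<in>{1..m}. adj (P k) = P k \<and> P k ** P k = P k) \<and>
     (\<forall>k\<in>{1..m}. \<forall>l\<in>{1..m}. k \<noteq> l \<longrightarrow> P k ** P l = 0) \<and>
     (\<Sum>k\<in>{1..m}. P k) = mat 1"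

definition general_measurement :: "('i \<Rightarrow> ('n::finite) cmat) \<Rightarrow> 'i set \<Rightarrow> bool" where
  "general_measurement M I \<longleftrightarrow> finite I \<and> I \<noteq> {} \<and>
     (\<Sum>i\<in>I. adj (M i) ** M i) = mat 1"

definition outcome_prob :: "('i \<Rightarrow> ('a::finite) cmat) \<Rightarrow> 'i \<Rightarrow> ('a \<times> ('b::finite)) cmat \<Rightarrow> real" where
  "outcome_prob M i R = Re (mtrace (kron (adj (M i) ** M i) (mat 1) ** R))"

definition post_state2 :: "('i \<Rightarrow> ('a::finite) cmat) \<Rightarrow> 'i \<Rightarrow> ('a \<times> ('b::finite)) cmat \<Rightarrow> 'b cmat" where
  "post_state2 M i R =
     (\<chi> j l. ptrace1 (kron (M i) (mat 1) ** R ** adj (kron (M i) (mat 1))) $ j $ l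
                 / complex_of_real (outcome_prob M i R))"

end

theory Submission
  imports Defs
begin

text \<open>Write \<open>E(H) = Re Tr[H \<rho>]\<close>, \<open>A = M\<^sub>i\<^sup>\<dagger> M\<^sub>i\<close> and \<open>X = I - \<Pi>'\<^sub>1\<close>. Then
  \<open>p\<^sub>i Tr[\<Pi>'\<^sub>1 \<tau>] = E(A \<otimes> \<Pi>'\<^sub>1) = p\<^sub>i - E(A \<otimes> X)\<close>. Positivity of \<open>\<rho>\<close> makes
  \<open>E\<close> nonnegative on every \<open>B\<^sup>\<dagger>B \<otimes> D\<^sup>\<dagger>D\<close>; since \<open>I - A\<close> is the sum of the other
  \<open>M\<^sub>j\<^sup>\<dagger> M\<^sub>j\<close> and \<open>X\<close>, \<open>I - \<Pi>\<^sub>1\<close> are projectors, this gives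
  \<open>0 \<le> E(A \<otimes> X) \<le> E(I \<otimes> X) \<le> 1 - E(\<Pi>\<^sub>1 \<otimes> \<Pi>'\<^sub>1) \<le> min \<epsilon> 1 \<le> \<surd>\<epsilon>\<close>.\<close>

lemma sum_UNIV_pair:
  "(\<Sum>p\<in>(UNIV::('a::finite \<times> 'b::finite) set). f p) = (\<Sum>x\<in>UNIV. \<Sum>y\<in>UNIV. f (x, y))"
  by (simp add: UNIV_Times_UNIV[symmetric] sum.cartesian_product split_beta del: UNIV_Times_UNIV)

lemma matrix_sub_ldistrib: "C ** (A - B) = C ** A - C ** (B :: 'a::ring_1^'n^'n)"
  by (simp add: vec_eq_iff matrix_matrix_mult_def right_diff_distrib sum_subtractf)

lemma matrix_sub_rdistrib: "(A - B) ** C = A ** C - B ** (C :: 'a::ring_1^'n^'n)"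
  by (simp add: vec_eq_iff matrix_matrix_mult_def left_diff_distrib sum_subtractf)

lemma matrix_sum_rdistrib: "(\<Sum>j\<in>S. A j) ** C = (\<Sum>j\<in>S. A j ** (C :: 'a::semiring_1^'n^'n))"
  by (induction S rule: infinite_finite_induct)
     (auto simp: vec_eq_iff matrix_matrix_mult_def distrib_right sum.distrib)

lemma adj_mat_one [simp]: "adj (mat 1) = mat 1"
  by (simp add: adj_def vec_eq_iff mat_def)

lemma adj_diff: "adj (A - B) = adj A - adj B"
  by (simp add: adj_def vec_eq_iff)

lemma kron_mult: "kron A B ** kron C D = kron (A ** C) (B ** D)"
  by (simp add: vec_eq_iff kron_def matrix_matrix_mult_def sum_UNIV_pair sum_product mult_ac)

lemma adj_kron: "adj (kron A B) = kron (adj A) (adj B)"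
  by (simp add: vec_eq_iff kron_def adj_def)

lemma kron_mat_one: "kron (mat 1) (mat 1) = mat 1"
  by (simp add: vec_eq_iff kron_def mat_def prod_eq_iff)

lemma kron_diff_left: "kron (A - B) C = kron A C - kron B C"
  by (simp add: vec_eq_iff kron_def left_diff_distrib)

lemma kron_diff_right: "kron C (A - B) = kron C A - kron C B"
  by (simp add: vec_eq_iff kron_def right_diff_distrib)

lemma kron_sum_left: "kron (\<Sum>j\<in>S. A j) C = (\<Sum>j\<in>S. kron (A j) C)"
  by (induction S rule: infinite_finite_induct) (auto simp: kron_def vec_eq_iff distrib_right)

lemma mtrace_eq_trace: "mtrace A = trace A"
  by (simp add: mtrace_def trace_def)

lemma mtrace_mult_ptrace1: "mtrace (Q ** ptrace1 Z) = mtrace (kron (mat 1) Q ** Z)"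
proof -
  have "mtrace (kron (mat 1) Q ** Z) =
      (\<Sum>a\<in>UNIV. \<Sum>j\<in>UNIV. \<Sum>l\<in>UNIV. Q $ j $ l * Z $ (a, l) $ (a, j))"
    unfolding mtrace_def matrix_matrix_mult_def sum_UNIV_pair
    by (intro sum.cong refl)
       (simp add: kron_def mat_def if_distrib if_distribR cong: if_cong, subst sum.swap, simp)
  also have "\<dots> = (\<Sum>j\<in>UNIV. \<Sum>l\<in>UNIV. \<Sum>a\<in>UNIV. Q $ j $ l * Z $ (a, l) $ (a, j))"
    by (subst sum.swap) (rule sum.cong[OF refl], rule sum.swap)
  also have "\<dots> = mtrace (Q ** ptrace1 Z)"
    by (simp add: mtrace_def matrix_matrix_mult_def ptrace1_def sum_distrib_left)
  finally show ?thesis ..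
qed

definition expectation :: "('n::finite) cmat \<Rightarrow> 'n cmat \<Rightarrow> real" where
  "expectation H R = Re (mtrace (H ** R))"

lemma expectation_diff: "expectation (H - K) R = expectation H R - expectation K R"
  by (simp add: expectation_def mtrace_eq_trace matrix_sub_rdistrib trace_sub)

lemma expectation_sum: "expectation (\<Sum>j\<in>S. H j) R = (\<Sum>j\<in>S. expectation (H j) R)"
  by (simp add: expectation_def matrix_sum_rdistrib mtrace_def sum_component Re_sum)
     (rule sum.swap)

text \<open>\<open>Tr[G\<^sup>\<dagger> G R] = \<Sum>\<^sub>k v\<^sub>k\<^sup>\<dagger> R v\<^sub>k\<close>, where \<open>v\<^sub>k\<close> is the conjugate of the \<open>k\<close>-th row of \<open>G\<close>.\<close>
lemma expectation_gram_nonneg: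
  assumes "psd R"
  shows "0 \<le> expectation (adj G ** G) R"
proof -
  define v where "v k = (\<chi> a. cnj (G $ k $ a))" for k
  have "mtrace (adj G ** G ** R) = mtrace (G ** R ** adj G)"
    unfolding mtrace_eq_trace by (metis trace_mul_sym matrix_mul_assoc)
  also have "\<dots> = (\<Sum>k\<in>UNIV. \<Sum>i\<in>UNIV. cnj (v k $ i) * (R *v v k) $ i)"
    unfolding mtrace_def matrix_matrix_mult_def matrix_vector_mult_def v_def adj_def
    by (simp add: sum_distrib_left sum_distrib_right mult_ac)
       (rule sum.cong[OF refl], rule sum.swap)
  finally have "mtrace (adj G ** G ** R) = (\<Sum>k\<in>UNIV. \<Sum>i\<in>UNIV. cnj (v k $ i) * (R *v v k) $ i)" .
  then show ?thesis
    using assms unfolding expectation_def psd_def Let_def by (simp add: sum_nonneg)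
qed

lemma expectation_kron_gram_nonneg:
  "psd R \<Longrightarrow> 0 \<le> expectation (kron (adj B ** B) (adj D ** D)) R"
  using expectation_gram_nonneg[of R "kron B D"] by (simp add: adj_kron kron_mult)

definition projector :: "('n::finite) cmat \<Rightarrow> bool" where
  "projector R \<longleftrightarrow> adj R = R \<and> R ** R = R"

lemma projector_gram: "projector R \<Longrightarrow> adj R ** R = R"
  by (simp add: projector_def)

lemma projector_compl: "projector R \<Longrightarrow> projector (mat 1 - R)"
  by (simp add: projector_def adj_diff matrix_sub_ldistrib matrix_sub_rdistrib)

lemma projective_measurement_projector:
  "projective_measurement P m \<Longrightarrow> k \<in> {1..m} \<Longrightarrow> projector (P k)"
  by (simp add: projective_measurement_def projector_def)

lemma expectation_kron_le_kron_identity: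
  assumes "psd R" and "mat 1 - A = (\<Sum>j\<in>S. adj (B j) ** B j)"
  shows "expectation (kron A (adj D ** D)) R \<le> expectation (kron (mat 1) (adj D ** D)) R"
proof -
  have "expectation (kron (mat 1) (adj D ** D)) R - expectation (kron A (adj D ** D)) R
      = expectation (kron (mat 1 - A) (adj D ** D)) R"
    by (simp add: kron_diff_left expectation_diff)
  also have "\<dots> = (\<Sum>j\<in>S. expectation (kron (adj (B j) ** B j) (adj D ** D)) R)"
    by (simp add: assms(2) kron_sum_left expectation_sum)
  also have "\<dots> \<ge> 0"
    by (intro sum_nonneg expectation_kron_gram_nonneg assms(1))
  finally show ?thesis by simp
qed

lemma expectation_kron_compl_le:
  assumes "psd R" and "mtrace R = 1" and "projector P" and "projector Q"
  shows "expectation (kron (mat 1) (mat 1 - Q)) R \<le> 1 - expectation (kron P Q) R"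
proof -
  have "expectation (kron (mat 1) (mat 1)) R = 1"
    using assms(2) by (simp add: expectation_def kron_mat_one)
  then have "1 - expectation (kron P Q) R - expectation (kron (mat 1) (mat 1 - Q)) R
      = expectation (kron (mat 1 - P) Q) R"
    by (simp add: kron_diff_left kron_diff_right expectation_diff)
  also have "\<dots> \<ge> 0"
    using expectation_kron_gram_nonneg[OF assms(1), of "mat 1 - P" Q]
    by (simp add: projector_gram projector_compl assms(3,4))
  finally show ?thesis by simp
qed

lemma mtrace_mult_post_state2:
  "mtrace (Q ** post_state2 M i R)
    = mtrace (kron (adj (M i) ** M i) Q ** R) / complex_of_real (outcome_prob M i R)"
proof -
  let ?K = "kron (M i) (mat 1)"
  have "mtrace (Q ** post_state2 M i R)
      = mtrace (Q ** ptrace1 (?K ** R ** adj ?K)) / complex_of_real (outcome_prob M i R)"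
    by (simp add: post_state2_def mtrace_def matrix_matrix_mult_def sum_divide_distrib)
  also have "mtrace (Q ** ptrace1 (?K ** R ** adj ?K)) = trace (adj ?K ** kron (mat 1) Q ** ?K ** R)"
    unfolding mtrace_mult_ptrace1 unfolding mtrace_eq_trace matrix_mul_assoc
    by (subst trace_mul_sym) (simp only: matrix_mul_assoc)
  also have "adj ?K ** kron (mat 1) Q ** ?K = kron (adj (M i) ** M i) Q"
    by (simp add: adj_kron kron_mult)
  finally show ?thesis by (simp add: mtrace_eq_trace)
qed

lemma real_le_sqrt_if_le_one:
  fixes x e :: real
  assumes "0 \<le> x" and "x \<le> 1" and "x \<le> e"
  shows "x \<le> sqrt e"
proof (rule real_le_rsqrt)
  have "x\<^sup>2 \<le> x"
    using assms(1,2) by (simp add: power2_eq_square mult_left_le)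
  with assms(3) show "x\<^sup>2 \<le> e" by linarith
qed

theorem mainTheorem9:
  fixes \<rho> :: "(('a::finite) \<times> ('b::finite)) cmat"
    and P :: "nat \<Rightarrow> 'a cmat" and m :: nat
    and Q :: "nat \<Rightarrow> 'b cmat" and m' :: nat
    and M :: "'i \<Rightarrow> 'a cmat" and I :: "'i set" and i :: 'i
    and \<epsilon> :: real
  assumes "density \<rho>"
    and "projective_measurement P m"
    and "projective_measurement Q m'"
    and "Re (mtrace (kron (P 1) (Q 1) ** \<rho>)) \<ge> 1 - \<epsilon>"
    and "general_measurement M I"
    and "i \<in> I"
    and "outcome_prob M i \<rho> > 0"
  shows "Re (mtrace (Q 1 ** post_state2 M i \<rho>)) \<ge> 1 - sqrt \<epsilon> / outcome_prob M i \<rho>"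
proof -
  let ?p = "outcome_prob M i \<rho>"
  define A where "A = adj (M i) ** M i"
  define X where "X = mat 1 - Q 1"
  define x where "x = expectation (kron A X) \<rho>"
  have \<rho>: "psd \<rho>" "mtrace \<rho> = 1" using assms(1) by (auto simp: density_def)
  have P: "projector (P 1)" and Q: "projector (Q 1)"
    using assms(2,3) projective_measurement_projector by (auto simp: projective_measurement_def)
  have X: "adj X ** X = X" unfolding X_def by (intro projector_gram projector_compl Q)
  have tau: "Re (mtrace (Q 1 ** post_state2 M i \<rho>)) = (?p - x) / ?p"
    by (simp add: mtrace_mult_post_state2 Re_divide_of_real x_def X_def A_def kron_diff_right
        expectation_diff outcome_prob_def) (simp add: expectation_def)
  have "mat 1 - A = (\<Sum>j\<in>I - {i}. adj (M j) ** M j)"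
    using assms(5,6) sum.remove[of I i "\<lambda>j. adj (M j) ** M j"]
    by (auto simp: general_measurement_def A_def)
  then have "x \<le> expectation (kron (mat 1) X) \<rho>"
    using expectation_kron_le_kron_identity[OF \<rho>(1), of A M "I - {i}" X]
    by (simp add: x_def X)
  also have "\<dots> \<le> 1 - expectation (kron (P 1) (Q 1)) \<rho>"
    unfolding X_def by (rule expectation_kron_compl_le[OF \<rho> P Q])
  finally have "x \<le> 1 - expectation (kron (P 1) (Q 1)) \<rho>" .
  moreover have "0 \<le> expectation (kron (P 1) (Q 1)) \<rho>"
    using expectation_kron_gram_nonneg[OF \<rho>(1), of "P 1" "Q 1"]
    unfolding projector_gram[OF P] projector_gram[OF Q] .
  moreover have "0 \<le> x"
    using expectation_kron_gram_nonneg[OF \<rho>(1), of "M i" X] by (simp add: x_def A_def X)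
  ultimately have "x \<le> sqrt \<epsilon>"
    using assms(4) by (intro real_le_sqrt_if_le_one) (auto simp: expectation_def)
  with tau assms(7) show ?thesis by (simp add: diff_divide_distrib divide_right_mono)
qed

end
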